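(* Let $n\ge 2$ and $\underline a\in I^n$ with $\Omega(\underline a)=\{i_1,\dots,i_s\}$, $i_1<\dots<i_s$. Then for any $k,l\in\Omega(\underline a)$, $$D_{kl}(x^{\underline a}x_kx_l)\in\mathrm{span}_{\mathbb F}\{D_{i_ji_{j+1}}(x^{\underline a}x_{i_j}x_{i_{j+1}})\mid 1\le j\le s-1\}.$$
   Context: $\mathbb F$ is a field of characteristic $p>2$, $I=\{0,\dots,p-1\}$. $\mathcal A(n)$ is the truncated polynomial algebra with basis $x^{\underline a}=x_1^{a_1}\cdots x_n^{a_n}$, $\underline a\in I^n$, and $x^{\underline a}x^{\underline b}=x^{\underline a+\underline b}$ ($=0$ if $\underline a+\underline b\notin I^n$); $\partial_i$ are the derivations with $\partial_i(x_j)=\delta_{ij}$, and $D_{ij}(f)=\partial_j(f)\partial_i-\partial_i(f)\partial_j\in W(n)=\mathrm{Der}\,\mathcal A(n)$. For $\underline a\in I^n$, $\Omega(\underline a)=\{i\mid a_i\neq p-1\}$. *)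

theory Defs
  imports Main
begin

text \<open>Truncated polynomial algebra A(n) over a field of characteristic p.
  Exponent vectors are functions nat => nat supported on the index set {1..n}
  with entries in I = {0..p-1}.  An element of A(n) is a coefficient function
  on exponent vectors (only the values on valid exponents matter).\<close>

type_synonym expo = "nat \<Rightarrow> nat"
type_synonym 'a tpoly = "expo \<Rightarrow> 'a"

definition addv :: "expo \<Rightarrow> expo \<Rightarrow> expo" where
  "addv a b = (\<lambda>i. a i + b i)"

definition exps :: "nat \<Rightarrow> nat \<Rightarrow> expo set" where
  "exps n p = {a. (\<forall>i\<in>{1..n}. a i < p) \<and> (\<forall>i. i \<notin> {1..n} \<longrightarrow> a i = 0)}"

definition monom_t :: "nat \<Rightarrow> nat \<Rightarrow> expo \<Rightarrow> 'a::field tpoly" where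
  "monom_t n p a = (\<lambda>b. if a \<in> exps n p \<and> b = a then 1 else 0)"

definition unitv :: "nat \<Rightarrow> expo" where
  "unitv i = (\<lambda>j. if j = i then 1 else 0)"

definition xvar :: "nat \<Rightarrow> nat \<Rightarrow> nat \<Rightarrow> 'a::field tpoly" where
  "xvar n p i = monom_t n p (unitv i)"

text \<open>Multiplication in A(n): x^a x^b = x^(a+b), or 0 if a+b is not in I^n.\<close>
definition tmul :: "nat \<Rightarrow> nat \<Rightarrow> 'a::field tpoly \<Rightarrow> 'a tpoly \<Rightarrow> 'a tpoly" where
  "tmul n p f g = (\<lambda>c. if c \<in> exps n p then
      (\<Sum>a\<in>exps n p. \<Sum>b\<in>exps n p. if addv a b = c then f a * g b else 0) else 0)"

text \<open>The partial derivative: d_i x^a = a_i x^(a - e_i).\<close>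
definition pderiv_t :: "nat \<Rightarrow> nat \<Rightarrow> nat \<Rightarrow> 'a::field tpoly \<Rightarrow> 'a tpoly" where
  "pderiv_t n p i f = (\<lambda>c. if c \<in> exps n p \<and> addv c (unitv i) \<in> exps n p
      then of_nat (c i + 1) * f (addv c (unitv i)) else 0)"

definition Dop :: "nat \<Rightarrow> nat \<Rightarrow> nat \<Rightarrow> nat \<Rightarrow> 'a::field tpoly \<Rightarrow> ('a tpoly \<Rightarrow> 'a tpoly)" where
  "Dop n p i j f = (\<lambda>g c. tmul n p (pderiv_t n p j f) (pderiv_t n p i g) c
                         - tmul n p (pderiv_t n p i f) (pderiv_t n p j g) c)"

definition Omega :: "nat \<Rightarrow> nat \<Rightarrow> expo \<Rightarrow> nat set" where
  "Omega n p a = {i\<in>{1..n}. a i \<noteq> p - 1}"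

definition in_span_ops :: "('b \<Rightarrow> 'c \<Rightarrow> 'a::field) \<Rightarrow> nat \<Rightarrow> (nat \<Rightarrow> 'b \<Rightarrow> 'c \<Rightarrow> 'a) \<Rightarrow> bool" where
  "in_span_ops v m w \<longleftrightarrow> (\<exists>c::nat \<Rightarrow> 'a. v = (\<lambda>g x. \<Sum>j<m. c j * w j g x))"

end

theory Submission
  imports Defs
begin

text \<open>Write \<open>\<alpha>\<^sub>i = a\<^sub>i + 1\<close> and \<open>H\<^sub>i = \<alpha>\<^sub>i\<^sup>-\<^sup>1 x\<^sup>a x\<^sub>i \<partial>\<^sub>i\<close>.  The product rule gives
  \<open>D\<^sub>k\<^sub>l(x\<^sup>a x\<^sub>k x\<^sub>l) = \<alpha>\<^sub>k \<alpha>\<^sub>l (H\<^sub>k - H\<^sub>l)\<close>, and for \<open>i \<in> \<Omega>(a)\<close> we have \<open>0 < a\<^sub>i + 1 < p\<close>,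
  so \<open>\<alpha>\<^sub>i\<close> is nonzero in the field.  The difference \<open>H\<^sub>k - H\<^sub>l\<close> telescopes into the
  differences of \<open>H\<close> at consecutive elements of \<open>\<Omega>(a)\<close>, and each of these is a nonzero
  multiple of the corresponding generator.\<close>

lemma finite_exps: "finite (exps n p)"
proof -
  have "exps n p = {f. \<forall>x. (x \<in> {1..n} \<longrightarrow> f x \<in> {..<p}) \<and> (x \<notin> {1..n} \<longrightarrow> f x = 0)}"
    unfolding exps_def by auto
  then show ?thesis
    using finite_set_of_finite_funs[of "{1..n}" "{..<p}" 0] by simp
qed

lemma unitv_in_exps: "1 < p \<Longrightarrow> i \<in> {1..n} \<Longrightarrow> unitv i \<in> exps n p"
  unfolding exps_def unitv_def by auto

lemma addv_unitv_in_exps: "a \<in> exps n p \<Longrightarrow> i \<in> Omega n p a \<Longrightarrow> addv a (unitv i) \<in> exps n p"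
  unfolding exps_def Omega_def addv_def unitv_def by force

lemma Omega_addv_unitv: "i \<noteq> j \<Longrightarrow> j \<in> Omega n p a \<Longrightarrow> j \<in> Omega n p (addv a (unitv i))"
  unfolding Omega_def addv_def unitv_def by auto

lemma addv_unitv_apply_other: "i \<noteq> j \<Longrightarrow> addv a (unitv i) j = a j"
  unfolding addv_def unitv_def by simp

lemma addv_unitv_commute: "addv (addv a (unitv i)) (unitv j) = addv (addv a (unitv j)) (unitv i)"
  unfolding addv_def by auto

lemma addv_unitv_cancel: "addv b (unitv i) = addv c (unitv i) \<longleftrightarrow> b = c"
proof
  assume "addv b (unitv i) = addv c (unitv i)"
  then have "b j + unitv i j = c j + unitv i j" for j
    unfolding addv_def by metis
  then show "b = c" by auto
qed simp

lemma Omega_exponent_Suc_nonzero: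
  assumes "CHAR('a::field) = p" "a \<in> exps n p" "i \<in> Omega n p a"
  shows "(of_nat (a i + 1) :: 'a) \<noteq> 0"
proof -
  from assms(2,3) have "a i + 1 < p"
    unfolding exps_def Omega_def by fastforce
  then have "\<not> p dvd a i + 1"
    by (auto dest: dvd_imp_le)
  with assms(1) show ?thesis
    by (metis of_nat_eq_0_iff_char_dvd)
qed

lemma tmul_monom_t:
  assumes "b \<in> exps n p" "c \<in> exps n p"
  shows "tmul n p (monom_t n p b :: 'a::field tpoly) (monom_t n p c) = monom_t n p (addv b c)"
proof
  fix d
  have "(\<Sum>b'\<in>exps n p. \<Sum>c'\<in>exps n p.
          if addv b' c' = d then (monom_t n p b :: 'a tpoly) b' * monom_t n p c c' else 0)
      = (\<Sum>b'\<in>exps n p. if b' = b then (\<Sum>c'\<in>exps n p.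
          if c' = c then (if addv b c = d then 1 else 0) else 0) else 0)"
    using assms by (auto simp: monom_t_def intro!: sum.cong sum.neutral)
  also have "\<dots> = (if addv b c = d then 1 else 0)"
    using assms finite_exps by simp
  finally show "tmul n p (monom_t n p b :: 'a tpoly) (monom_t n p c) d = monom_t n p (addv b c) d"
    unfolding tmul_def monom_t_def by auto
qed

lemma tmul_monom_t_xvar:
  assumes "1 < p" "i \<in> {1..n}" "a \<in> exps n p"
  shows "tmul n p (monom_t n p a :: 'a::field tpoly) (xvar n p i) = monom_t n p (addv a (unitv i))"
  unfolding xvar_def using assms by (simp add: tmul_monom_t unitv_in_exps)

lemma tmul_scale_left: "tmul n p (\<lambda>c. s * f c) g = (\<lambda>c. s * tmul n p f g c)"
  unfolding tmul_def by (auto simp: sum_distrib_left mult.assoc intro!: ext sum.cong)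

lemma pderiv_t_monom_t:
  assumes "b \<in> exps n p" "addv b (unitv i) \<in> exps n p"
  shows "pderiv_t n p i (monom_t n p (addv b (unitv i)) :: 'a::field tpoly)
       = (\<lambda>c. of_nat (b i + 1) * monom_t n p b c)"
  unfolding pderiv_t_def monom_t_def using assms by (auto simp: addv_unitv_cancel)

lemma Dop_same: "Dop n p i i f = (\<lambda>g c. 0)"
  unfolding Dop_def by simp

definition monom_pderiv :: "nat \<Rightarrow> nat \<Rightarrow> expo \<Rightarrow> nat \<Rightarrow> 'a::field tpoly \<Rightarrow> 'a tpoly" where
  "monom_pderiv n p a i g = tmul n p (monom_t n p (addv a (unitv i))) (pderiv_t n p i g)"

lemma Dop_monom_t:
  assumes a: "a \<in> exps n p" and k: "k \<in> Omega n p a" and l: "l \<in> Omega n p a" and "k \<noteq> l"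
  shows "Dop n p k l (monom_t n p (addv (addv a (unitv k)) (unitv l)) :: 'a::field tpoly)
       = (\<lambda>g c. of_nat (a l + 1) * monom_pderiv n p a k g c - of_nat (a k + 1) * monom_pderiv n p a l g c)"
proof -
  have ak: "addv a (unitv k) \<in> exps n p" and al: "addv a (unitv l) \<in> exps n p"
    using a k l by (simp_all add: addv_unitv_in_exps)
  have akl: "addv (addv a (unitv k)) (unitv l) \<in> exps n p"
    using addv_unitv_in_exps[OF ak Omega_addv_unitv[OF \<open>k \<noteq> l\<close> l]] .
  then have alk: "addv (addv a (unitv l)) (unitv k) \<in> exps n p"
    by (simp add: addv_unitv_commute)
  have "pderiv_t n p l (monom_t n p (addv (addv a (unitv k)) (unitv l)) :: 'a tpoly)
      = (\<lambda>c. of_nat (a l + 1) * monom_t n p (addv a (unitv k)) c)"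
    using pderiv_t_monom_t[OF ak akl] \<open>k \<noteq> l\<close> by (simp add: addv_unitv_apply_other)
  moreover have "pderiv_t n p k (monom_t n p (addv (addv a (unitv k)) (unitv l)) :: 'a tpoly)
      = (\<lambda>c. of_nat (a k + 1) * monom_t n p (addv a (unitv l)) c)"
    using pderiv_t_monom_t[OF al alk] \<open>k \<noteq> l\<close>
    by (simp add: addv_unitv_apply_other addv_unitv_commute)
  ultimately show ?thesis
    unfolding Dop_def monom_pderiv_def by (simp add: tmul_scale_left)
qed

lemma in_span_ops_rescale:
  fixes d :: "nat \<Rightarrow> 'a::field"
  assumes "in_span_ops v m w"
    and "\<And>j. j < m \<Longrightarrow> d j \<noteq> 0"
    and "\<And>g x. v' g x = s * v g x"
    and "\<And>j g x. j < m \<Longrightarrow> w' j g x = d j * w j g x"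
  shows "in_span_ops v' m w'"
proof -
  from assms(1) obtain c where c: "v = (\<lambda>g x. \<Sum>j<m. c j * w j g x)"
    unfolding in_span_ops_def by blast
  have "v' g x = (\<Sum>j<m. s * c j / d j * w' j g x)" for g x
    using assms(2-4) by (simp add: c sum_distrib_left)
  then show ?thesis
    unfolding in_span_ops_def by (intro exI[of _ "\<lambda>j. s * c j / d j"] ext)
qed

lemma in_span_ops_telescope_le:
  fixes h :: "nat \<Rightarrow> 'b \<Rightarrow> 'c \<Rightarrow> 'a::field"
  assumes "u \<le> v" "v \<le> m"
  shows "in_span_ops (\<lambda>g x. h u g x - h v g x) m (\<lambda>j g x. h j g x - h (Suc j) g x)"
proof -
  have "h u g x - h v g x = (\<Sum>j<m. of_bool (j \<in> {u..<v}) * (h j g x - h (Suc j) g x))" for g x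
  proof -
    have "h u g x - h v g x = - (\<Sum>j=u..<v. h (Suc j) g x - h j g x)"
      using sum_Suc_diff'[OF assms(1), of "\<lambda>j. h j g x"] by simp
    also have "\<dots> = (\<Sum>j\<in>{..<m} \<inter> {u..<v}. h j g x - h (Suc j) g x)"
      using assms(2) by (simp add: Int_absorb1 sum_negf[symmetric] subset_eq)
    also have "\<dots> = (\<Sum>j<m. of_bool (j \<in> {u..<v}) * (h j g x - h (Suc j) g x))"
      by (auto simp: sum.inter_restrict intro!: sum.cong)
    finally show ?thesis .
  qed
  then show ?thesis
    unfolding in_span_ops_def by (intro exI[of _ "\<lambda>j. of_bool (j \<in> {u..<v})"] ext)
qed

lemma in_span_ops_telescope:
  fixes h :: "nat \<Rightarrow> 'b \<Rightarrow> 'c \<Rightarrow> 'a::field"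
  assumes "u \<le> m" "v \<le> m"
  shows "in_span_ops (\<lambda>g x. h u g x - h v g x) m (\<lambda>j g x. h j g x - h (Suc j) g x)"
proof (cases "u \<le> v")
  case True
  then show ?thesis using assms(2) by (rule in_span_ops_telescope_le)
next
  case False
  then have "in_span_ops (\<lambda>g x. h v g x - h u g x) m (\<lambda>j g x. h j g x - h (Suc j) g x)"
    using assms(1) by (intro in_span_ops_telescope_le) auto
  then show ?thesis
    by (rule in_span_ops_rescale[where s = "-1" and d = "\<lambda>_. 1"]) simp_all
qed

lemma in_span_ops_scaled_differences:
  fixes \<alpha> :: "'i \<Rightarrow> 'a::field" and H :: "'i \<Rightarrow> 'b \<Rightarrow> 'c \<Rightarrow> 'a"
  assumes "k \<in> set L" "l \<in> set L"
    and "\<And>i. i \<in> set L \<Longrightarrow> \<alpha> i \<noteq> 0"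
    and "\<And>u v. u \<in> set L \<Longrightarrow> v \<in> set L \<Longrightarrow> W u v = (\<lambda>g x. \<alpha> u * \<alpha> v * (H u g x - H v g x))"
  shows "in_span_ops (W k l) (length L - 1) (\<lambda>j. W (L ! j) (L ! (j + 1)))"
proof -
  obtain u v where u: "u < length L" "L ! u = k" and v: "v < length L" "L ! v = l"
    using assms(1,2) by (metis in_set_conv_nth)
  then have "in_span_ops (\<lambda>g x. H (L ! u) g x - H (L ! v) g x) (length L - 1)
               (\<lambda>j g x. H (L ! j) g x - H (L ! Suc j) g x)"
    by (intro in_span_ops_telescope) auto
  then show ?thesis
    by (rule in_span_ops_rescale[where s = "\<alpha> k * \<alpha> l" and d = "\<lambda>j. \<alpha> (L ! j) * \<alpha> (L ! Suc j)"])
      (use assms(1-3) u v in \<open>simp_all add: assms(4)\<close>)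
qed

lemma Dop_monom_t_xvar_xvar:
  assumes "CHAR('a::field) = p" "1 < p" "a \<in> exps n p" "u \<in> Omega n p a" "v \<in> Omega n p a"
  shows "Dop n p u v (tmul n p (tmul n p (monom_t n p a :: 'a tpoly) (xvar n p u)) (xvar n p v))
       = (\<lambda>g c. of_nat (a u + 1) * of_nat (a v + 1) *
            (monom_pderiv n p a u g c / of_nat (a u + 1) - monom_pderiv n p a v g c / of_nat (a v + 1)))"
proof (cases "u = v")
  case True
  then show ?thesis by (simp add: Dop_same)
next
  case False
  have "u \<in> {1..n}" "v \<in> {1..n}"
    using assms(4,5) unfolding Omega_def by auto
  then have "tmul n p (tmul n p (monom_t n p a :: 'a tpoly) (xvar n p u)) (xvar n p v)
      = monom_t n p (addv (addv a (unitv u)) (unitv v))"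
    using assms(2-4) by (simp add: tmul_monom_t_xvar addv_unitv_in_exps)
  then show ?thesis
    using Dop_monom_t[OF assms(3-5) False] Omega_exponent_Suc_nonzero[OF assms(1,3)] assms(4,5)
    by (simp add: right_diff_distrib)
qed

theorem lemma4p2:
  fixes p n :: nat and a :: expo and k l :: nat
  assumes "CHAR('a::field) = p" and "p > 2"
    and "n \<ge> 2"
    and "a \<in> exps n p"
    and "k \<in> Omega n p a" and "l \<in> Omega n p a"
  shows "let L = sorted_list_of_set (Omega n p a); s = length L;
             X = (\<lambda>u v. tmul n p (tmul n p (monom_t n p a :: 'a tpoly) (xvar n p u)) (xvar n p v))
         in in_span_ops (Dop n p k l (X k l)) (s - 1)
              (\<lambda>j. Dop n p (L ! j) (L ! (j + 1)) (X (L ! j) (L ! (j + 1))))"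
proof -
  have set_L: "set (sorted_list_of_set (Omega n p a)) = Omega n p a"
    unfolding Omega_def by simp
  show ?thesis
    unfolding Let_def
  proof (rule in_span_ops_scaled_differences[where \<alpha> = "\<lambda>i. of_nat (a i + 1)"
        and H = "\<lambda>i g c. monom_pderiv n p a i g c / of_nat (a i + 1)"])
    show "k \<in> set (sorted_list_of_set (Omega n p a))" "l \<in> set (sorted_list_of_set (Omega n p a))"
      using assms(5,6) set_L by simp_all
    show "(of_nat (a i + 1) :: 'a) \<noteq> 0" if "i \<in> set (sorted_list_of_set (Omega n p a))" for i
      using Omega_exponent_Suc_nonzero[OF assms(1,4)] that set_L by simp
    show "Dop n p u v (tmul n p (tmul n p (monom_t n p a :: 'a tpoly) (xvar n p u)) (xvar n p v))
        = (\<lambda>g c. of_nat (a u + 1) * of_nat (a v + 1) *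
            (monom_pderiv n p a u g c / of_nat (a u + 1) - monom_pderiv n p a v g c / of_nat (a v + 1)))"
      if "u \<in> set (sorted_list_of_set (Omega n p a))" "v \<in> set (sorted_list_of_set (Omega n p a))"
      for u v
      using assms(2) that set_L by (intro Dop_monom_t_xvar_xvar[OF assms(1) _ assms(4)]) auto
  qed
qed

end
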